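(* Let $T$ be a tree as below with an interior edge $e$, and suppose (after relabeling) that $\mathrm{de}(e)=\{1,\dots,k\}$. Let $T_e^-$ and $T_e^+$ be as below. Grade $\mathbb{K}[q]$ by $\deg q_{g_1\cdots g_n}=e_{g_1+\cdots+g_k}$, grade $\mathbb{K}[q]_-$ by $\deg q_{g_1\cdots g_k}=e_{g_1+\cdots+g_k}$, and grade $\mathbb{K}[q]_+$ by $\deg q_{h\,g_{k+1}\cdots g_n}=e_h$, where $e_h$ ($h\in G$) are the standard unit vectors of $\mathbb{Z}^G$; let $\mathcal{A}=\{e_h:h\in G\}$. Then $\mathcal{A}$ is linearly independent and $$I_{G,T}=I_{G,T_e^+}\times_{\mathcal{A}}I_{G,T_e^-},$$ where the toric fiber product variable corresponding to $q_{g_1\cdots g_n}$ is the product of $q_{h\,g_{k+1}\cdots g_n}\in\mathbb{K}[q]_+$ and $q_{g_1\cdots g_k}\in\mathbb{K}[q]_-$ with $h=g_1+\cdots+g_k$.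
   Context: $\mathbb{K}$ is a field, $G$ a finite group written additively (not necessarily abelian). $T$ is a tree with leaves labeled $1,\dots,n+1$, rooted at leaf $n+1$, with edges directed away from the root. For an edge $e$, $\mathrm{de}(e)$ is the set of leaves reachable from $e$ by a directed path; it is assumed that every $\mathrm{de}(e)$ is an interval of integers. For $g_1,\dots,g_n\in G$, $g_e=\sum_{i\in\mathrm{de}(e)}g_i$, summed in increasing order of $i$. $\mathbb{K}[q]=\mathbb{K}[q_{g_1\cdots g_n}:g_i\in G]$, $\mathbb{K}[a]=\mathbb{K}[a^{(e)}_h: e\in E(T),h\in G]$, $\phi_{G,T}:q_{g_1\cdots g_n}\mapsto\prod_{e\in E(T)}a^{(e)}_{g_e}$, and $I_{G,T}=\ker\phi_{G,T}$. Edges are partially ordered by $e'<e$ if there is a directed path from $e$ to $e'$. An interior edge is one not incident to any leaf. $T_e^-$ is the subtree consisting of edges $e'\le e$, rooted at the tail of $e$, with non-root leaves $1,\dots,k$; $T_e^+$ is the subtree of edges $e'$ with $e'\not<e$ (so $T_e^+\cap T_e^-=\{e\}$), rooted at $n+1$, whose non-root leaves are the head of $e$ (listed first, carrying group label $h$) followed by $k+1,\dots,n$. $\mathbb{K}[q]_-=\mathbb{K}[q_{g_1\cdots g_k}]$ and $\mathbb{K}[q]_+=\mathbb{K}[q_{h\,g_{k+1}\cdots g_n}]$ are the ambient rings of $I_{G,T_e^-}$ and $I_{G,T_e^+}$, defined by the same construction for these rooted trees. Toric fiber product: for polynomial rings $\mathbb{K}[x^i_j]$, $\mathbb{K}[y^i_k]$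 graded by $\deg x^i_j=\deg y^i_k=\mathbf{a}^i$ and homogeneous ideals $I,J$, $I\times_{\mathcal{A}}J$ is the kernel of $\mathbb{K}[z^i_{jk}]\to\mathbb{K}[x]/I\otimes_{\mathbb{K}}\mathbb{K}[y]/J$, $z^i_{jk}\mapsto x^i_j\otimes y^i_k$; here the degree classes are indexed by $h\in G$. *)

theory Defs
  imports Main "HOL-Library.Poly_Mapping"
begin

type_synonym ('x, 'k) mpoly = "('x \<Rightarrow>\<^sub>0 nat) \<Rightarrow>\<^sub>0 'k"

definition Var :: "'x \<Rightarrow> ('x, 'k::comm_ring_1) mpoly" where
  "Var x = Poly_Mapping.single (Poly_Mapping.single x 1) 1"

definition Const :: "'k::comm_ring_1 \<Rightarrow> ('x, 'k) mpoly" where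
  "Const c = Poly_Mapping.single 0 c"

definition pvars :: "('x, 'k::zero) mpoly \<Rightarrow> 'x set" where
  "pvars p = (\<Union>m\<in>Poly_Mapping.keys p. Poly_Mapping.keys (m :: 'x \<Rightarrow>\<^sub>0 nat))"

definition polys_in :: "'x set \<Rightarrow> ('x, 'k::zero) mpoly set" where
  "polys_in V = {p. pvars p \<subseteq> V}"

definition subst :: "('x \<Rightarrow> ('y, 'k::comm_ring_1) mpoly) \<Rightarrow> ('x, 'k) mpoly \<Rightarrow> ('y, 'k) mpoly" where
  "subst P p = (\<Sum>\<alpha>\<in>Poly_Mapping.keys p. Const (Poly_Mapping.lookup p \<alpha>) * (\<Prod>x\<in>Poly_Mapping.keys \<alpha>. P x ^ Poly_Mapping.lookup \<alpha> x))"

inductive_set gen_ideal :: "('x, 'k::comm_ring_1) mpoly set \<Rightarrow> ('x, 'k) mpoly set"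
  for S where
  zero: "0 \<in> gen_ideal S"
| gen: "f \<in> S \<Longrightarrow> r * f \<in> gen_ideal S"
| add: "a \<in> gen_ideal S \<Longrightarrow> b \<in> gen_ideal S \<Longrightarrow> a + b \<in> gen_ideal S"

text \<open>We use the standard identification
  K[x]/I \<otimes>_K K[y]/J = K[x \<squnion> y]/(I + J), where I, J are extended to K[x \<squnion> y]
  (disjoint union of variables realised via the sum type).\<close>

definition tfp_vars :: "'x set \<Rightarrow> 'y set \<Rightarrow> ('x \<Rightarrow> 'd) \<Rightarrow> ('y \<Rightarrow> 'd) \<Rightarrow> ('x \<times> 'y) set" where
  "tfp_vars Vx Vy degx degy = {(j, k). j \<in> Vx \<and> k \<in> Vy \<and> degx j = degy k}"

definition toric_fiber_product ::
  "'x set \<Rightarrow> 'y set \<Rightarrow> ('x \<Rightarrow> 'd) \<Rightarrow> ('y \<Rightarrow> 'd) \<Rightarrow>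
   ('x, 'k::comm_ring_1) mpoly set \<Rightarrow> ('y, 'k) mpoly set \<Rightarrow> ('x \<times> 'y, 'k) mpoly set" where
  "toric_fiber_product Vx Vy degx degy I J =
     {p \<in> polys_in (tfp_vars Vx Vy degx degy).
        subst (\<lambda>(j, k). Var (Inl j) * Var (Inr k)) p
          \<in> gen_ideal (subst (\<lambda>x. Var (Inl x)) ` I \<union> subst (\<lambda>y. Var (Inr y)) ` J)}"

text \<open>A rooted tree: finite set E of directed edges (tail, head) on vertices of type 'v,
  root r, list ls of the non-root leaves (leaf i+1 in the paper is ls ! i).\<close>

definition tree_vertices :: "('v \<times> 'v) set \<Rightarrow> 'v set" where
  "tree_vertices E = fst ` E \<union> snd ` E"

definition undirected_degree :: "('v \<times> 'v) set \<Rightarrow> 'v \<Rightarrow> nat" where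
  "undirected_degree E v = card {e \<in> E. fst e = v} + card {e \<in> E. snd e = v}"

definition rooted_tree :: "('v \<times> 'v) set \<Rightarrow> 'v \<Rightarrow> 'v list \<Rightarrow> bool" where
  "rooted_tree E r ls \<longleftrightarrow>
     finite E \<and> E \<noteq> {} \<and>
     r \<in> tree_vertices E \<and>
     (\<forall>e\<in>E. snd e \<noteq> r) \<and>
     (\<forall>v\<in>tree_vertices E. v \<noteq> r \<longrightarrow> card {e \<in> E. snd e = v} = 1) \<and>
     (\<forall>v\<in>tree_vertices E. (r, v) \<in> E\<^sup>*) \<and>
     distinct (r # ls) \<and>
     set (r # ls) = {v \<in> tree_vertices E. undirected_degree E v = 1}"

text \<open>de(e): the (0-based) indices i of non-root leaves ls ! i reachable from e by a
  directed path (i.e. reachable from the head of e, the path starting with e).\<close>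
definition de :: "('v \<times> 'v) set \<Rightarrow> 'v list \<Rightarrow> ('v \<times> 'v) \<Rightarrow> nat set" where
  "de E ls e = {i. i < length ls \<and> (snd e, ls ! i) \<in> E\<^sup>*}"

definition edge_label :: "('v \<times> 'v) set \<Rightarrow> 'v list \<Rightarrow> ('v \<times> 'v) \<Rightarrow> 'g::monoid_add list \<Rightarrow> 'g" where
  "edge_label E ls e gs = sum_list (map (\<lambda>i. gs ! i) (filter (\<lambda>i. i \<in> de E ls e) [0..<length ls]))"

definition q_vars :: "nat \<Rightarrow> 'g list set" where
  "q_vars m = {gs. length gs = m}"

text \<open>phi_{G,T}: q_{g_1..g_m} \<mapsto> prod_{e \<in> E} a^{(e)}_{g_e}; a-variables indexed by (e, h).\<close>
definition phi :: "('v \<times> 'v) set \<Rightarrow> 'v list \<Rightarrow> ('g::monoid_add list, 'k::comm_ring_1) mpoly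
     \<Rightarrow> (('v \<times> 'v) \<times> 'g, 'k) mpoly" where
  "phi E ls = subst (\<lambda>gs. \<Prod>e\<in>E. Var (e, edge_label E ls e gs))"

definition I_GT :: "('v \<times> 'v) set \<Rightarrow> 'v list \<Rightarrow> ('g::monoid_add list, 'k::comm_ring_1) mpoly set" where
  "I_GT E ls = {p \<in> polys_in (q_vars (length ls)). phi E ls p = 0}"

definition edge_less :: "('v \<times> 'v) set \<Rightarrow> ('v \<times> 'v) \<Rightarrow> ('v \<times> 'v) \<Rightarrow> bool" where
  "edge_less E e' e \<longleftrightarrow> e' \<noteq> e \<and> (snd e, fst e') \<in> E\<^sup>*"

definition interior_edge :: "('v \<times> 'v) set \<Rightarrow> 'v \<Rightarrow> 'v list \<Rightarrow> ('v \<times> 'v) \<Rightarrow> bool" where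
  "interior_edge E r ls e \<longleftrightarrow> e \<in> E \<and> fst e \<notin> set (r # ls) \<and> snd e \<notin> set (r # ls)"

text \<open>T_e^-: edges e' \<le> e, rooted at the tail of e, non-root leaves ls!0..ls!(k-1).\<close>
definition minus_edges :: "('v \<times> 'v) set \<Rightarrow> ('v \<times> 'v) \<Rightarrow> ('v \<times> 'v) set" where
  "minus_edges E e = {e' \<in> E. e' = e \<or> edge_less E e' e}"

text \<open>T_e^+: edges e' with not e' < e, rooted at r, non-root leaves: head of e, then
  ls!k, ..., ls!(n-1).\<close>
definition plus_edges :: "('v \<times> 'v) set \<Rightarrow> ('v \<times> 'v) \<Rightarrow> ('v \<times> 'v) set" where
  "plus_edges E e = {e' \<in> E. \<not> edge_less E e' e}"

definition unit_vec :: "'g \<Rightarrow> ('g \<Rightarrow> int)" where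
  "unit_vec h = (\<lambda>h'. if h' = h then 1 else 0)"

definition int_lin_independent :: "('g \<Rightarrow> int) set \<Rightarrow> bool" where
  "int_lin_independent S \<longleftrightarrow>
     \<not> (\<exists>t u. finite t \<and> t \<subseteq> S \<and> (\<lambda>h'. \<Sum>v\<in>t. u v * v h') = (\<lambda>_. 0) \<and> (\<exists>v\<in>t. u v \<noteq> 0))"

end

theory Submission
  imports Defs
begin

text \<open>
  The parametrization phi_T sends every variable to a monomial, so its kernel I_T is spanned by
  binomials x^\<alpha> - x^\<beta> with phi_T(x^\<alpha>) = phi_T(x^\<beta>). Cutting T at e, the image of
  q_(g_1...g_n) is the product of the images of q_(h g_(k+1)...g_n) under phi_(T_e^+) and of
  q_(g_1...g_k) under phi_(T_e^-), where h = g_1 + ... + g_k, except that the variable of e occurs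
  in both factors. Writing A_\<alpha> and B_\<alpha> for the two halves of x^\<alpha>, the binomial therefore
  becomes A_\<alpha> B_\<alpha> - A_\<beta> B_\<beta> = B_\<alpha> (A_\<alpha> - A_\<beta>) + A_\<beta> (B_\<alpha> - B_\<beta>), and both differences
  lie in the ideals of the halves. Conversely, phi_(T_e^+) \<otimes> phi_(T_e^-) kills the toric
  fiber product, and after undoing the renaming of variables it equals phi_T followed by the
  injective monomial map that squares the variables of e.
\<close>

abbreviation keys :: "('a \<Rightarrow>\<^sub>0 'b::zero) \<Rightarrow> 'a set" where
  "keys \<equiv> Poly_Mapping.keys"

abbreviation lookup :: "('a \<Rightarrow>\<^sub>0 'b::zero) \<Rightarrow> 'a \<Rightarrow> 'b" where
  "lookup \<equiv> Poly_Mapping.lookup"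

abbreviation monomial :: "('x \<Rightarrow>\<^sub>0 nat) \<Rightarrow> ('x, 'k::comm_ring_1) mpoly" where
  "monomial \<alpha> \<equiv> Poly_Mapping.single \<alpha> 1"

section \<open>Substitution homomorphisms\<close>

definition eval_monom :: "('x \<Rightarrow> ('y, 'k::comm_ring_1) mpoly) \<Rightarrow> ('x \<Rightarrow>\<^sub>0 nat) \<Rightarrow> ('y, 'k) mpoly" where
  "eval_monom P \<alpha> = (\<Prod>x\<in>keys \<alpha>. P x ^ lookup \<alpha> x)"

lemma subst_eq_sum_eval_monom: "subst P p = (\<Sum>\<alpha>\<in>keys p. Const (lookup p \<alpha>) * eval_monom P \<alpha>)"
  unfolding subst_def eval_monom_def ..

lemma eval_monom_superset:
  "finite S \<Longrightarrow> keys \<alpha> \<subseteq> S \<Longrightarrow> eval_monom P \<alpha> = (\<Prod>x\<in>S. P x ^ lookup \<alpha> x)"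
  unfolding eval_monom_def by (rule prod.mono_neutral_left) (auto simp: in_keys_iff)

lemma keys_add_nat: "keys (\<alpha> + \<beta> :: 'x \<Rightarrow>\<^sub>0 nat) = keys \<alpha> \<union> keys \<beta>"
  by (auto simp: in_keys_iff lookup_add)

lemma eval_monom_add: "eval_monom P (\<alpha> + \<beta>) = eval_monom P \<alpha> * eval_monom P \<beta>"
proof -
  let ?S = "keys \<alpha> \<union> keys \<beta>"
  have "eval_monom P (\<alpha> + \<beta>) = (\<Prod>x\<in>?S. P x ^ lookup (\<alpha> + \<beta>) x)"
    by (rule eval_monom_superset) (auto simp: keys_add_nat)
  also have "\<dots> = (\<Prod>x\<in>?S. P x ^ lookup \<alpha> x) * (\<Prod>x\<in>?S. P x ^ lookup \<beta> x)"
    by (simp add: lookup_add power_add prod.distrib)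
  also have "\<dots> = eval_monom P \<alpha> * eval_monom P \<beta>"
    using eval_monom_superset[of ?S \<alpha> P] eval_monom_superset[of ?S \<beta> P] by simp
  finally show ?thesis .
qed

lemma eval_monom_zero [simp]: "eval_monom P 0 = 1"
  by (simp add: eval_monom_def)

lemma eval_monom_cong:
  "(\<And>x. x \<in> keys \<alpha> \<Longrightarrow> P x = Q x) \<Longrightarrow> eval_monom P \<alpha> = eval_monom Q \<alpha>"
  unfolding eval_monom_def by (rule prod.cong) auto

lemma Const_1 [simp]: "Const 1 = 1"
  by (simp add: Const_def)

lemma Const_add: "Const (a + b) = Const a + Const b"
  by (simp add: Const_def single_add)

lemma Const_mult: "Const (a * b) = Const a * Const b"
  by (simp add: Const_def mult_single)

lemma Const_mult_monomial: "Const c * monomial \<alpha> = Poly_Mapping.single \<alpha> c"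
  by (simp add: Const_def mult_single)

lemma subst_superset:
  "finite S \<Longrightarrow> keys p \<subseteq> S \<Longrightarrow> subst P p = (\<Sum>\<alpha>\<in>S. Const (lookup p \<alpha>) * eval_monom P \<alpha>)"
  unfolding subst_eq_sum_eval_monom
  by (rule sum.mono_neutral_left) (auto simp: in_keys_iff Const_def)

lemma subst_zero [simp]: "subst P 0 = 0"
  by (simp add: subst_def)

lemma subst_single: "subst P (Poly_Mapping.single \<alpha> c) = Const c * eval_monom P \<alpha>"
  by (cases "c = 0") (simp_all add: subst_eq_sum_eval_monom Const_def)

lemma subst_add: "subst P (p + q) = subst P p + subst P q"
proof -
  let ?S = "keys p \<union> keys q"
  have "subst P (p + q) = (\<Sum>\<alpha>\<in>?S. Const (lookup (p + q) \<alpha>) * eval_monom P \<alpha>)"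
    using keys_add[of p q] by (intro subst_superset) auto
  also have "\<dots> = (\<Sum>\<alpha>\<in>?S. Const (lookup p \<alpha>) * eval_monom P \<alpha>)
      + (\<Sum>\<alpha>\<in>?S. Const (lookup q \<alpha>) * eval_monom P \<alpha>)"
    by (simp add: lookup_add Const_add distrib_right sum.distrib)
  also have "\<dots> = subst P p + subst P q"
    using subst_superset[of ?S p P] subst_superset[of ?S q P] by simp
  finally show ?thesis .
qed

lemma subst_diff: "subst P (p - q) = subst P p - subst P q"
  using subst_add[of P "p - q" q] by (simp add: algebra_simps)

lemma subst_sum: "subst P (\<Sum>i\<in>A. f i) = (\<Sum>i\<in>A. subst P (f i))"
  by (induction A rule: infinite_finite_induct) (simp_all add: subst_add)

lemma poly_mapping_sum_single: "p = (\<Sum>\<alpha>\<in>keys p. Poly_Mapping.single \<alpha> (lookup p \<alpha>))"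
  by (rule poly_mapping_eqI) (simp add: lookup_sum lookup_single when_def in_keys_iff)

lemma subst_mult: "subst P (p * q) = subst P p * subst P q"
proof -
  let ?s = "\<lambda>p \<alpha>. Poly_Mapping.single \<alpha> (lookup p \<alpha>)"
  have "p * q = (\<Sum>\<alpha>\<in>keys p. \<Sum>\<beta>\<in>keys q. ?s p \<alpha> * ?s q \<beta>)"
    by (subst (1 2) poly_mapping_sum_single) (simp add: sum_product)
  then have "subst P (p * q) = (\<Sum>\<alpha>\<in>keys p. \<Sum>\<beta>\<in>keys q. subst P (?s p \<alpha>) * subst P (?s q \<beta>))"
    by (simp add: subst_sum mult_single subst_single eval_monom_add Const_mult mult_ac)
  also have "\<dots> = subst P p * subst P q"
    by (subst (3 4) poly_mapping_sum_single) (simp add: subst_sum sum_product)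
  finally show ?thesis .
qed

lemma subst_one [simp]: "subst P 1 = 1"
  using subst_single[of P 0 1] by simp

lemma subst_Var [simp]: "subst P (Var x) = P x"
  by (simp add: Var_def subst_single eval_monom_def Const_def del: One_nat_def)

lemma subst_prod: "subst P (\<Prod>i\<in>A. f i) = (\<Prod>i\<in>A. subst P (f i))"
  by (induction A rule: infinite_finite_induct) (simp_all add: subst_mult)

lemma subst_power: "subst P (f ^ n) = subst P f ^ n"
  by (induction n) (simp_all add: subst_mult)

lemma subst_eval_monom: "subst P (eval_monom Q \<alpha>) = eval_monom (\<lambda>x. subst P (Q x)) \<alpha>"
  unfolding eval_monom_def by (simp add: subst_prod subst_power)

lemma subst_Const [simp]: "subst P (Const c) = Const c"
  by (simp add: Const_def subst_single)

lemma subst_subst: "subst P (subst Q p) = subst (\<lambda>x. subst P (Q x)) p"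
  unfolding subst_eq_sum_eval_monom[of Q] subst_eq_sum_eval_monom[of "\<lambda>x. subst P (Q x)"]
  by (simp add: subst_sum subst_mult subst_eval_monom)

lemma keys_subset_pvars: "\<alpha> \<in> keys p \<Longrightarrow> keys \<alpha> \<subseteq> pvars p"
  unfolding pvars_def by auto

lemma subst_cong: "(\<And>x. x \<in> pvars p \<Longrightarrow> P x = Q x) \<Longrightarrow> subst P p = subst Q p"
  unfolding subst_eq_sum_eval_monom
  by (intro sum.cong refl arg_cong2[where f = "(*)"] eval_monom_cong)
     (use keys_subset_pvars in blast)

lemma pvars_add: "pvars (a + b) \<subseteq> pvars a \<union> pvars b"
  unfolding pvars_def using keys_add[of a b] by blast

lemma pvars_diff: "pvars (a - b) \<subseteq> pvars a \<union> pvars b"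
  unfolding pvars_def using keys_diff[of a b] by blast

lemma pvars_mult: "pvars (a * b) \<subseteq> pvars a \<union> pvars b"
proof
  fix x assume "x \<in> pvars (a * b)"
  then obtain m where m: "m \<in> keys (a * b)" "x \<in> keys m"
    unfolding pvars_def by blast
  then obtain \<alpha> \<beta> where "m = \<alpha> + \<beta>" "\<alpha> \<in> keys a" "\<beta> \<in> keys b"
    using keys_mult[of a b] by auto
  then show "x \<in> pvars a \<union> pvars b"
    using m(2) keys_add_nat[of \<alpha> \<beta>] unfolding pvars_def by blast
qed

lemma pvars_Const: "pvars (Const c) = {}"
  by (simp add: pvars_def Const_def)

lemma pvars_Var: "pvars (Var x :: ('x, 'k::comm_ring_1) mpoly) = {x}"
  by (simp add: pvars_def Var_def)

lemma pvars_sum: "(\<And>i. i \<in> A \<Longrightarrow> pvars (f i) \<subseteq> V) \<Longrightarrow> pvars (\<Sum>i\<in>A. f i) \<subseteq> V"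
proof (induction A rule: infinite_finite_induct)
  case (insert x F)
  then show ?case using pvars_add[of "f x" "sum f F"] by auto
qed (simp_all add: pvars_def)

lemma pvars_prod: "(\<And>i. i \<in> A \<Longrightarrow> pvars (f i) \<subseteq> V) \<Longrightarrow> pvars (\<Prod>i\<in>A. f i) \<subseteq> V"
proof (induction A rule: infinite_finite_induct)
  case (insert x F)
  then show ?case using pvars_mult[of "f x" "prod f F"] by auto
qed (simp_all add: pvars_def)

lemma pvars_power: "pvars a \<subseteq> V \<Longrightarrow> pvars (a ^ n) \<subseteq> V"
proof (induction n)
  case (Suc n)
  then show ?case using pvars_mult[of a "a ^ n"] by auto
qed (simp add: pvars_def)

lemma pvars_eval_monom:
  "(\<And>x. x \<in> keys \<alpha> \<Longrightarrow> pvars (P x) \<subseteq> V) \<Longrightarrow> pvars (eval_monom P \<alpha>) \<subseteq> V"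
  unfolding eval_monom_def by (intro pvars_prod pvars_power) auto

lemma pvars_subst: "(\<And>x. x \<in> pvars p \<Longrightarrow> pvars (P x) \<subseteq> V) \<Longrightarrow> pvars (subst P p) \<subseteq> V"
  unfolding subst_eq_sum_eval_monom
proof (intro pvars_sum)
  fix \<alpha> assume "\<And>x. x \<in> pvars p \<Longrightarrow> pvars (P x) \<subseteq> V" and "\<alpha> \<in> keys p"
  then have "pvars (eval_monom P \<alpha>) \<subseteq> V"
    by (intro pvars_eval_monom) (use keys_subset_pvars in blast)
  then show "pvars (Const (lookup p \<alpha>) * eval_monom P \<alpha>) \<subseteq> V"
    using pvars_mult[of "Const (lookup p \<alpha>)" "eval_monom P \<alpha>"] unfolding pvars_Const by simp
qed

lemma gen_ideal_mult: "a \<in> gen_ideal S \<Longrightarrow> r * a \<in> gen_ideal S"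
proof (induction a rule: gen_ideal.induct)
  case (gen f s)
  then show ?case using gen_ideal.gen[of f S "r * s"] by (simp add: mult.assoc)
next
  case (add a b)
  then show ?case using gen_ideal.add by (simp add: distrib_left)
qed (simp add: gen_ideal.zero)

lemma gen_ideal_sum: "(\<And>i. i \<in> A \<Longrightarrow> f i \<in> gen_ideal S) \<Longrightarrow> (\<Sum>i\<in>A. f i) \<in> gen_ideal S"
  by (induction A rule: infinite_finite_induct) (simp_all add: gen_ideal.zero gen_ideal.add)

lemma subst_gen_ideal_eq_zero:
  "a \<in> gen_ideal S \<Longrightarrow> (\<And>f. f \<in> S \<Longrightarrow> subst P f = 0) \<Longrightarrow> subst P a = 0"
  by (induction a rule: gen_ideal.induct) (simp_all add: subst_mult subst_add)

section \<open>Monomial maps\<close>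

definition monomial_map :: "('x \<Rightarrow> ('y \<Rightarrow>\<^sub>0 nat)) \<Rightarrow> ('x \<Rightarrow>\<^sub>0 nat) \<Rightarrow> ('y \<Rightarrow>\<^sub>0 nat)" where
  "monomial_map \<mu> \<alpha> = (\<Sum>x\<in>keys \<alpha>. \<Sum>_<lookup \<alpha> x. \<mu> x)"

lemma lookup_monomial_map:
  "lookup (monomial_map \<mu> \<alpha>) y = (\<Sum>x\<in>keys \<alpha>. lookup \<alpha> x * lookup (\<mu> x) y)"
  by (simp add: monomial_map_def lookup_sum)

lemma monomial_power: "monomial m ^ n = (monomial (\<Sum>_<n. m) :: ('x, 'k::comm_ring_1) mpoly)"
  by (induction n) (simp_all add: mult_single add.commute)

lemma prod_monomial: "(\<Prod>x\<in>S. monomial (f x)) = (monomial (\<Sum>x\<in>S. f x) :: ('x, 'k::comm_ring_1) mpoly)"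
  by (induction S rule: infinite_finite_induct) (simp_all add: mult_single)

lemma eval_monom_monomials:
  "eval_monom (\<lambda>x. monomial (\<mu> x)) \<alpha> = (monomial (monomial_map \<mu> \<alpha>) :: ('y, 'k::comm_ring_1) mpoly)"
  unfolding eval_monom_def monomial_map_def by (simp add: monomial_power prod_monomial)

lemma subst_monomials:
  "subst (\<lambda>x. monomial (\<mu> x)) p
     = (\<Sum>\<alpha>\<in>keys p. Poly_Mapping.single (monomial_map \<mu> \<alpha>) (lookup p \<alpha> :: 'k::comm_ring_1))"
  unfolding subst_eq_sum_eval_monom eval_monom_monomials by (simp add: Const_mult_monomial)

lemma lookup_subst_monomials:
  "lookup (subst (\<lambda>x. monomial (\<mu> x)) p) \<gamma>
     = (\<Sum>\<alpha>\<in>{\<alpha>\<in>keys p. monomial_map \<mu> \<alpha> = \<gamma>}. lookup p \<alpha> :: 'k::comm_ring_1)"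
  unfolding subst_monomials lookup_sum by (simp add: lookup_single when_def sum.inter_filter)

lemma subst_monomials_eq_zero_imp:
  assumes "inj (monomial_map \<mu>)" and "subst (\<lambda>x. monomial (\<mu> x)) p = (0 :: ('y, 'k::comm_ring_1) mpoly)"
  shows "p = 0"
proof (rule poly_mapping_eqI)
  fix \<alpha>
  have "{\<beta>\<in>keys p. monomial_map \<mu> \<beta> = monomial_map \<mu> \<alpha>} = (if \<alpha> \<in> keys p then {\<alpha>} else {})"
    using assms(1) by (auto dest: injD)
  then have "lookup p \<alpha> = lookup (subst (\<lambda>x. monomial (\<mu> x)) p :: ('y, 'k) mpoly) (monomial_map \<mu> \<alpha>)"
    unfolding lookup_subst_monomials by (simp add: in_keys_iff)
  then show "lookup p \<alpha> = lookup 0 \<alpha>" using assms(2) by simp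
qed

lemma inj_monomial_map_single:
  fixes c :: "'y \<Rightarrow> nat"
  assumes "\<And>y. c y > 0"
  shows "inj (monomial_map (\<lambda>y. Poly_Mapping.single y (c y)))"
proof (rule injI)
  fix \<alpha> \<beta> :: "'y \<Rightarrow>\<^sub>0 nat"
  have lookup_eq: "lookup (monomial_map (\<lambda>y. Poly_Mapping.single y (c y)) \<gamma>) v = lookup \<gamma> v * c v"
    for \<gamma> v
    unfolding lookup_monomial_map lookup_single when_def
    by (simp add: if_distrib[of "(*) _"] sum.delta in_keys_iff cong: if_cong)
  assume "monomial_map (\<lambda>y. Poly_Mapping.single y (c y)) \<alpha> = monomial_map (\<lambda>y. Poly_Mapping.single y (c y)) \<beta>"
  then have "lookup \<alpha> v * c v = lookup \<beta> v * c v" for v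
    by (metis lookup_eq)
  then show "\<alpha> = \<beta>"
    using assms by (intro poly_mapping_eqI) (metis less_irrefl mult_right_cancel)
qed

lemma subst_Var_self: "subst Var p = (p :: ('x, 'k::comm_ring_1) mpoly)"
proof -
  have monomial_map_id: "monomial_map (\<lambda>x. Poly_Mapping.single x 1) \<alpha> = \<alpha>" for \<alpha> :: "'x \<Rightarrow>\<^sub>0 nat"
    by (rule poly_mapping_eqI)
       (simp add: lookup_monomial_map lookup_single when_def if_distrib[of "(*) _"] sum.delta
          in_keys_iff cong: if_cong)
  have "subst Var p = subst (\<lambda>x. monomial (Poly_Mapping.single x 1)) p"
    unfolding Var_def[abs_def] ..
  also have "\<dots> = p"
    unfolding subst_monomials monomial_map_id by (rule poly_mapping_sum_single[symmetric])
  finally show ?thesis .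
qed

lemma sum_single_fibrewise_eq_zero:
  fixes p :: "('x, 'k::comm_ring_1) mpoly"
  assumes kernel: "subst (\<lambda>x. monomial (\<mu> x)) p = (0 :: ('y, 'k) mpoly)"
    and fibres: "\<And>\<alpha> \<alpha>'. \<alpha> \<in> keys p \<Longrightarrow> \<alpha>' \<in> keys p \<Longrightarrow>
        rep \<alpha> = rep \<alpha>' \<longleftrightarrow> monomial_map \<mu> \<alpha> = monomial_map \<mu> \<alpha>'"
  shows "(\<Sum>\<alpha>\<in>keys p. Poly_Mapping.single (rep \<alpha>) (lookup p \<alpha>)) = 0"
proof (rule poly_mapping_eqI)
  fix \<beta>
  have "lookup (\<Sum>\<alpha>\<in>keys p. Poly_Mapping.single (rep \<alpha>) (lookup p \<alpha>)) \<beta>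
      = (\<Sum>\<alpha>\<in>{\<alpha>\<in>keys p. rep \<alpha> = \<beta>}. lookup p \<alpha>)"
    by (simp add: lookup_sum lookup_single when_def sum.inter_filter)
  also have "\<dots> = 0"
  proof (cases "\<exists>\<alpha>\<^sub>0\<in>keys p. rep \<alpha>\<^sub>0 = \<beta>")
    case True
    then obtain \<alpha>\<^sub>0 where "\<alpha>\<^sub>0 \<in> keys p" "rep \<alpha>\<^sub>0 = \<beta>" by blast
    then have "{\<alpha>\<in>keys p. rep \<alpha> = \<beta>} = {\<alpha>\<in>keys p. monomial_map \<mu> \<alpha> = monomial_map \<mu> \<alpha>\<^sub>0}"
      using fibres by auto
    also have "(\<Sum>\<alpha>\<in>\<dots>. lookup p \<alpha>) = lookup (subst (\<lambda>x. monomial (\<mu> x)) p) (monomial_map \<mu> \<alpha>\<^sub>0)"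
      by (rule lookup_subst_monomials[symmetric])
    finally show ?thesis using kernel by simp
  next
    case False
    then have "{\<alpha>\<in>keys p. rep \<alpha> = \<beta>} = {}" by blast
    then show ?thesis by (simp only: sum.empty)
  qed
  finally show "lookup (\<Sum>\<alpha>\<in>keys p. Poly_Mapping.single (rep \<alpha>) (lookup p \<alpha>)) \<beta> = lookup 0 \<beta>"
    by simp
qed

lemma kernel_subst_monomials_binomials:
  fixes p :: "('x, 'k::comm_ring_1) mpoly"
  assumes kernel: "subst (\<lambda>x. monomial (\<mu> x)) p = (0 :: ('y, 'k) mpoly)"
  obtains rep where "\<And>\<alpha>. \<alpha> \<in> keys p \<Longrightarrow> rep \<alpha> \<in> keys p \<and> monomial_map \<mu> (rep \<alpha>) = monomial_map \<mu> \<alpha>"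
    and "p = (\<Sum>\<alpha>\<in>keys p. Const (lookup p \<alpha>) * (monomial \<alpha> - monomial (rep \<alpha>)))"
proof -
  define rep where "rep \<alpha> = (SOME \<beta>. \<beta> \<in> keys p \<and> monomial_map \<mu> \<beta> = monomial_map \<mu> \<alpha>)" for \<alpha>
  have rep: "rep \<alpha> \<in> keys p \<and> monomial_map \<mu> (rep \<alpha>) = monomial_map \<mu> \<alpha>" if "\<alpha> \<in> keys p" for \<alpha>
    unfolding rep_def by (rule someI_ex) (use that in blast)
  have "rep \<alpha> = rep \<alpha>' \<longleftrightarrow> monomial_map \<mu> \<alpha> = monomial_map \<mu> \<alpha>'"
    if "\<alpha> \<in> keys p" "\<alpha>' \<in> keys p" for \<alpha> \<alpha>'
  proof
    assume "rep \<alpha> = rep \<alpha>'"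
    then show "monomial_map \<mu> \<alpha> = monomial_map \<mu> \<alpha>'"
      using rep[OF that(1)] rep[OF that(2)] by simp
  next
    assume "monomial_map \<mu> \<alpha> = monomial_map \<mu> \<alpha>'"
    then show "rep \<alpha> = rep \<alpha>'" unfolding rep_def by simp
  qed
  then have "(\<Sum>\<alpha>\<in>keys p. Poly_Mapping.single (rep \<alpha>) (lookup p \<alpha>)) = 0"
    by (rule sum_single_fibrewise_eq_zero[OF kernel])
  then have "p = (\<Sum>\<alpha>\<in>keys p. Poly_Mapping.single \<alpha> (lookup p \<alpha>) - Poly_Mapping.single (rep \<alpha>) (lookup p \<alpha>))"
    using poly_mapping_sum_single[of p] by (simp add: sum_subtractf)
  also have "\<dots> = (\<Sum>\<alpha>\<in>keys p. Const (lookup p \<alpha>) * (monomial \<alpha> - monomial (rep \<alpha>)))"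
    by (simp add: right_diff_distrib Const_mult_monomial)
  finally have "p = (\<Sum>\<alpha>\<in>keys p. Const (lookup p \<alpha>) * (monomial \<alpha> - monomial (rep \<alpha>)))" .
  with rep show ?thesis by (rule that)
qed

lemma subst_kernel_monomials_in_gen_ideal:
  fixes p :: "('x, 'k::comm_ring_1) mpoly"
  assumes kernel: "subst (\<lambda>x. monomial (\<mu> x)) p = (0 :: ('y, 'k) mpoly)"
    and binomials: "\<And>\<alpha> \<beta>. \<alpha> \<in> keys p \<Longrightarrow> \<beta> \<in> keys p \<Longrightarrow> monomial_map \<mu> \<alpha> = monomial_map \<mu> \<beta> \<Longrightarrow>
        eval_monom N \<alpha> - eval_monom N \<beta> \<in> gen_ideal S"
  shows "subst N p \<in> gen_ideal S"
proof -
  obtain rep where rep: "\<And>\<alpha>. \<alpha> \<in> keys p \<Longrightarrow> rep \<alpha> \<in> keys p \<and> monomial_map \<mu> (rep \<alpha>) = monomial_map \<mu> \<alpha>"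
    and p_eq: "p = (\<Sum>\<alpha>\<in>keys p. Const (lookup p \<alpha>) * (monomial \<alpha> - monomial (rep \<alpha>)))"
    using kernel_subst_monomials_binomials[OF kernel] by blast
  have "subst N p = (\<Sum>\<alpha>\<in>keys p. Const (lookup p \<alpha>) * (eval_monom N \<alpha> - eval_monom N (rep \<alpha>)))"
    by (subst p_eq) (simp add: subst_sum subst_mult subst_diff subst_single)
  also have "\<dots> \<in> gen_ideal S"
    using rep by (intro gen_ideal_sum gen_ideal_mult binomials) auto
  finally show ?thesis .
qed

section \<open>Rooted trees\<close>

lemma rooted_tree_finite: "rooted_tree E r ls \<Longrightarrow> finite E"
  unfolding rooted_tree_def by blast

lemma rooted_tree_no_edge_into_root:
  assumes "rooted_tree E r ls"
  shows "(x, r) \<notin> E"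
proof -
  have "\<forall>e\<in>E. snd e \<noteq> r" using assms unfolding rooted_tree_def by blast
  then show ?thesis by force
qed

lemma rooted_tree_reach_from_root: "rooted_tree E r ls \<Longrightarrow> v \<in> tree_vertices E \<Longrightarrow> (r, v) \<in> E\<^sup>*"
  unfolding rooted_tree_def by blast

lemma rooted_tree_in_edge_unique:
  assumes T: "rooted_tree E r ls" and "(w, v) \<in> E" "(y, v) \<in> E"
  shows "w = y"
proof -
  have "v \<in> tree_vertices E" unfolding tree_vertices_def using assms(2) by force
  moreover have "v \<noteq> r" using rooted_tree_no_edge_into_root[OF T] assms(2) by blast
  ultimately have "card {e \<in> E. snd e = v} = 1"
    using T unfolding rooted_tree_def by blast
  then obtain a where "{e \<in> E. snd e = v} = {a}" by (rule card_1_singletonE)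
  moreover have "(w, v) \<in> {e \<in> E. snd e = v}" "(y, v) \<in> {e \<in> E. snd e = v}"
    using assms(2,3) by auto
  ultimately show ?thesis by (metis prod.inject singletonD)
qed

lemma rooted_tree_reach_comparable:
  assumes T: "rooted_tree E r ls" and "(a, v) \<in> E\<^sup>*" "(b, v) \<in> E\<^sup>*"
  shows "(a, b) \<in> E\<^sup>* \<or> (b, a) \<in> E\<^sup>*"
  using assms(2,3)
proof (induction arbitrary: b rule: rtrancl_induct)
  case (step y z)
  show ?case
  proof (cases "b = z")
    case True
    then show ?thesis using step.hyps by (meson rtrancl.rtrancl_into_rtrancl)
  next
    case False
    then have "(b, z) \<in> E\<^sup>+" using step.prems by (meson rtranclD)
    then obtain w where w: "(b, w) \<in> E\<^sup>*" "(w, z) \<in> E" by (meson tranclD2)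
    then have "w = y" using rooted_tree_in_edge_unique[OF T w(2) step.hyps(2)] by simp
    then show ?thesis using step.IH w(1) by blast
  qed
qed blast

lemma rooted_tree_acyclic:
  assumes T: "rooted_tree E r ls"
  shows "acyclic E"
proof (rule acyclicI, intro allI notI)
  fix v assume cycle: "(v, v) \<in> E\<^sup>+"
  then obtain u where "(u, v) \<in> E" by (meson tranclD2)
  then have "v \<in> tree_vertices E" unfolding tree_vertices_def by force
  then have "(r, v) \<in> E\<^sup>*" by (rule rooted_tree_reach_from_root[OF T])
  then show False
    using cycle
  proof (induction rule: rtrancl_induct)
    case base
    then obtain w where "(w, r) \<in> E" by (meson tranclD2)
    then show ?case using rooted_tree_no_edge_into_root[OF T] by blast
  next
    case (step y v)
    then obtain w where w: "(v, w) \<in> E\<^sup>*" "(w, v) \<in> E" by (meson tranclD2)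
    then have "w = y" using rooted_tree_in_edge_unique[OF T w(2) step.hyps(2)] by simp
    then show ?case using step w by (meson rtrancl_into_trancl2)
  qed
qed

lemma rooted_tree_edge_not_back:
  assumes "rooted_tree E r ls" "e \<in> E"
  shows "(snd e, fst e) \<notin> E\<^sup>*"
proof
  assume "(snd e, fst e) \<in> E\<^sup>*"
  then have "(fst e, fst e) \<in> E\<^sup>+"
    using assms(2) by (metis prod.collapse rtrancl_into_trancl2)
  then show False
    using rooted_tree_acyclic[OF assms(1)] unfolding acyclic_def by blast
qed

lemma plus_edges_subset: "plus_edges E e \<subseteq> E"
  unfolding plus_edges_def by auto

lemma minus_edges_subset: "minus_edges E e \<subseteq> E"
  unfolding minus_edges_def by auto

lemma plus_edges_Un_minus_edges: "plus_edges E e \<union> minus_edges E e = E"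
  unfolding plus_edges_def minus_edges_def by auto

lemma plus_edges_Int_minus_edges: "e \<in> E \<Longrightarrow> plus_edges E e \<inter> minus_edges E e = {e}"
  unfolding plus_edges_def minus_edges_def edge_less_def by auto

lemma minus_edges_reach:
  assumes "(x, v) \<in> E\<^sup>*" "(snd e, x) \<in> E\<^sup>*"
  shows "(x, v) \<in> (minus_edges E e)\<^sup>*"
  using assms
proof (induction rule: rtrancl_induct)
  case (step y z)
  then have "(snd e, y) \<in> E\<^sup>*" by (meson rtrancl_trans)
  then have "(y, z) \<in> minus_edges E e"
    using step.hyps(2) unfolding minus_edges_def edge_less_def by auto
  then show ?case using step by (meson rtrancl.rtrancl_into_rtrancl)
qed simp

lemma plus_edges_reach:
  assumes "(x, v) \<in> E\<^sup>*" "(snd e, v) \<notin> E\<^sup>*"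
  shows "(x, v) \<in> (plus_edges E e)\<^sup>*"
  using assms
proof (induction rule: converse_rtrancl_induct)
  case (step x y)
  have "\<not> edge_less E (x, y) e"
  proof
    assume "edge_less E (x, y) e"
    then have "(snd e, x) \<in> E\<^sup>*" unfolding edge_less_def by simp
    then have "(snd e, v) \<in> E\<^sup>*"
      using step.hyps by (meson converse_rtrancl_into_rtrancl rtrancl_trans)
    then show False using step.prems by simp
  qed
  then have "(x, y) \<in> plus_edges E e"
    using step.hyps(1) unfolding plus_edges_def by simp
  then show ?case using step by (meson converse_rtrancl_into_rtrancl)
qed simp

lemma plus_edges_reach_head:
  assumes T: "rooted_tree E r ls" and e: "e \<in> E" and reach: "(x, snd e) \<in> E\<^sup>*"
  shows "(x, snd e) \<in> (plus_edges E e)\<^sup>*"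
proof (cases "x = snd e")
  case False
  then have "(x, snd e) \<in> E\<^sup>+" using reach by (meson rtranclD)
  then obtain w where w: "(x, w) \<in> E\<^sup>*" "(w, snd e) \<in> E" by (meson tranclD2)
  have "w = fst e" using rooted_tree_in_edge_unique[OF T w(2), of "fst e"] e by simp
  then have "(x, fst e) \<in> (plus_edges E e)\<^sup>*"
    using plus_edges_reach[OF w(1)] rooted_tree_edge_not_back[OF T e] by simp
  moreover have "e \<in> plus_edges E e" using e unfolding plus_edges_def edge_less_def by simp
  ultimately show ?thesis by (metis prod.collapse rtrancl.rtrancl_into_rtrancl)
qed simp

section \<open>The monomial parametrization\<close>

definition phi_var :: "('v \<times> 'v) set \<Rightarrow> 'v list \<Rightarrow> 'g::monoid_add list \<Rightarrow> (('v \<times> 'v) \<times> 'g, 'k::comm_ring_1) mpoly" where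
  "phi_var E L gs = (\<Prod>e'\<in>E. Var (e', edge_label E L e' gs))"

definition phi_exponent :: "('v \<times> 'v) set \<Rightarrow> 'v list \<Rightarrow> 'g::monoid_add list \<Rightarrow> (('v \<times> 'v) \<times> 'g) \<Rightarrow>\<^sub>0 nat" where
  "phi_exponent E L gs = (\<Sum>e'\<in>E. Poly_Mapping.single (e', edge_label E L e' gs) 1)"

lemma phi_eq_subst_phi_var: "phi E L = subst (phi_var E L)"
  unfolding phi_def phi_var_def[abs_def] ..

lemma phi_var_eq_monomial: "phi_var E L = (\<lambda>gs. monomial (phi_exponent E L gs))"
  by (simp add: fun_eq_iff phi_var_def phi_exponent_def Var_def prod_monomial)

lemma subst_restrict_phi_var:
  assumes "finite E" "F \<subseteq> E"
  shows "subst (\<lambda>v. if fst v \<in> F then Var v else 1) (phi_var E L gs)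
    = (\<Prod>e'\<in>F. Var (e', edge_label E L e' gs) :: (('v \<times> 'v) \<times> 'g::monoid_add, 'k::comm_ring_1) mpoly)"
proof -
  have "subst (\<lambda>v. if fst v \<in> F then Var v else 1) (phi_var E L gs)
      = (\<Prod>e'\<in>E. if e' \<in> F then Var (e', edge_label E L e' gs) else 1 :: (_, 'k) mpoly)"
    unfolding phi_var_def subst_prod subst_Var by simp
  also have "\<dots> = (\<Prod>e'\<in>{x \<in> E. x \<in> F}. Var (e', edge_label E L e' gs))"
    using assms(1) by (simp add: prod.inter_filter)
  also have "{x \<in> E. x \<in> F} = F" using assms(2) by blast
  finally show ?thesis .
qed

lemma binomial_in_I_GT:
  fixes f :: "'x \<Rightarrow> 'g::monoid_add list" and P :: "'x \<Rightarrow> ('y, 'k::comm_ring_1) mpoly"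
  assumes "keys \<alpha> \<subseteq> Q" "keys \<beta> \<subseteq> Q" and "eval_monom P \<alpha> = eval_monom P \<beta>"
    and "\<And>x. x \<in> Q \<Longrightarrow> f x \<in> q_vars (length L)"
    and "\<And>x. x \<in> Q \<Longrightarrow> subst R (P x) = phi_var E L (f x)"
  shows "eval_monom (\<lambda>x. Var (f x)) \<alpha> - eval_monom (\<lambda>x. Var (f x)) \<beta> \<in> (I_GT E L :: ('g list, 'k) mpoly set)"
proof -
  have pvars_le: "pvars (eval_monom (\<lambda>x. Var (f x) :: ('g list, 'k) mpoly) \<gamma>) \<subseteq> q_vars (length L)"
    if "keys \<gamma> \<subseteq> Q" for \<gamma>
    by (rule pvars_eval_monom) (use that assms(4) in \<open>auto simp: pvars_Var\<close>)
  have phi_eq: "phi E L (eval_monom (\<lambda>x. Var (f x) :: ('g list, 'k) mpoly) \<gamma>) = subst R (eval_monom P \<gamma>)"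
    if "keys \<gamma> \<subseteq> Q" for \<gamma>
    unfolding phi_eq_subst_phi_var subst_eval_monom subst_Var
    by (rule eval_monom_cong) (use that assms(5) in auto)
  show ?thesis
    using pvars_diff pvars_le[OF assms(1)] pvars_le[OF assms(2)]
      phi_eq[OF assms(1)] phi_eq[OF assms(2)] assms(3)
    unfolding I_GT_def polys_in_def phi_def by (fastforce simp: subst_diff)
qed

section \<open>Splitting the tree at an edge\<close>

lemma sum_list_filter_upt_add:
  "sum_list (map g (filter P [0..<k + m])) = sum_list (map g (filter P [0..<k])) +
     sum_list (map (\<lambda>i. g (k + i)) (filter (\<lambda>i. P (k + i)) [0..<m]))"
proof -
  have "map (\<lambda>i. k + i) [0..<m] = [k..<k + m]" by (rule nth_equalityI) auto
  then have "[0..<k + m] = [0..<k] @ map (\<lambda>i. k + i) [0..<m]"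
    using upt_add_eq_append[of 0 k m] by simp
  then show ?thesis by (simp add: filter_map comp_def)
qed

lemma sum_list_filter_upt_const:
  assumes "k \<le> length gs" and "\<And>i. i < k \<Longrightarrow> P i \<longleftrightarrow> c"
  shows "sum_list (map (\<lambda>i. gs ! i) (filter P [0..<k])) = (if c then sum_list (take k gs) else 0)"
proof (cases c)
  case True
  then have "filter P [0..<k] = [0..<k]" using assms(2) by (intro filter_True) simp
  moreover have "map (\<lambda>i. gs ! i) [0..<k] = take k gs"
    using assms(1) by (intro nth_equalityI) auto
  ultimately show ?thesis using True by simp
next
  case False
  then have "filter P [0..<k] = []" using assms(2) by (intro filter_False) simp
  then show ?thesis using False by simp
qed

locale edge_split =
  fixes E :: "('v \<times> 'v) set" and r :: 'v and ls :: "'v list" and e :: "'v \<times> 'v" and k :: nat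
  assumes tree: "rooted_tree E r ls" and edge: "e \<in> E" and de_e: "de E ls e = {0..<k}"
begin

abbreviation plus_leaves :: "'v list" where
  "plus_leaves \<equiv> snd e # drop k ls"

abbreviation minus_leaves :: "'v list" where
  "minus_leaves \<equiv> take k ls"

abbreviation plus_index :: "'g::monoid_add list \<Rightarrow> 'g list" where
  "plus_index gs \<equiv> sum_list (take k gs) # drop k gs"

abbreviation minus_index :: "'g list \<Rightarrow> 'g list" where
  "minus_index gs \<equiv> take k gs"

lemma k_le_length: "k \<le> length ls"
proof (rule ccontr)
  assume "\<not> k \<le> length ls"
  then have "length ls \<in> de E ls e" using de_e by simp
  then show False unfolding de_def by simp
qed

lemma minus_edges_head_reach: "e' \<in> minus_edges E e \<Longrightarrow> (snd e, snd e') \<in> E\<^sup>*"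
  unfolding minus_edges_def edge_less_def
  by (metis (mono_tags, lifting) mem_Collect_eq prod.collapse rtrancl.rtrancl_into_rtrancl rtrancl.rtrancl_refl)

lemma de_minus_edges_subset:
  assumes "e' \<in> minus_edges E e"
  shows "de E ls e' \<subseteq> {0..<k}"
  using rtrancl_trans[OF minus_edges_head_reach[OF assms]] de_e unfolding de_def by blast

lemma de_minus_edges_iff:
  assumes "e' \<in> minus_edges E e" and "i < k"
  shows "i \<in> de (minus_edges E e) minus_leaves e' \<longleftrightarrow> i \<in> de E ls e'"
proof -
  have "(snd e', ls ! i) \<in> (minus_edges E e)\<^sup>* \<longleftrightarrow> (snd e', ls ! i) \<in> E\<^sup>*"
    using minus_edges_reach[of "snd e'" "ls ! i" E e] minus_edges_head_reach[OF assms(1)]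
      rtrancl_mono[OF minus_edges_subset] by blast
  then show ?thesis
    using assms(2) k_le_length unfolding de_def by auto
qed

lemma edge_label_minus_edges:
  fixes gs :: "'g::monoid_add list"
  assumes e': "e' \<in> minus_edges E e"
  shows "edge_label (minus_edges E e) minus_leaves e' (minus_index gs) = edge_label E ls e' gs"
proof -
  have "edge_label E ls e' gs
      = sum_list (map (\<lambda>i. gs ! i) (filter (\<lambda>i. i \<in> de E ls e') [0..<k + (length ls - k)]))"
    unfolding edge_label_def using k_le_length by simp
  also have "\<dots> = sum_list (map (\<lambda>i. gs ! i) (filter (\<lambda>i. i \<in> de E ls e') [0..<k]))"
    using de_minus_edges_subset[OF e'] unfolding sum_list_filter_upt_add
    by (subst filter_False) auto
  also have "\<dots> = sum_list (map (\<lambda>i. take k gs ! i) (filter (\<lambda>i. i \<in> de (minus_edges E e) minus_leaves e') [0..<k]))"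
    using de_minus_edges_iff[OF e'] by (intro arg_cong[where f = sum_list] map_cong filter_cong) auto
  also have "\<dots> = edge_label (minus_edges E e) minus_leaves e' (minus_index gs)"
    unfolding edge_label_def using k_le_length by (simp add: min_absorb2)
  finally show ?thesis by simp
qed

lemma de_plus_edges_head_iff:
  "0 \<in> de (plus_edges E e) plus_leaves e' \<longleftrightarrow> (snd e', snd e) \<in> E\<^sup>*"
proof -
  have "(snd e', snd e) \<in> (plus_edges E e)\<^sup>* \<longleftrightarrow> (snd e', snd e) \<in> E\<^sup>*"
    using rtrancl_mono[OF plus_edges_subset[of E e]] plus_edges_reach_head[OF tree edge] by blast
  then show ?thesis unfolding de_def by simp
qed

lemma de_plus_edges_Suc_iff:
  assumes "i < length ls - k"
  shows "Suc i \<in> de (plus_edges E e) plus_leaves e' \<longleftrightarrow> k + i \<in> de E ls e'"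
proof -
  have "k + i \<notin> de E ls e" using de_e by simp
  then have "(snd e, ls ! (k + i)) \<notin> E\<^sup>*" using assms unfolding de_def by simp
  then have "(snd e', ls ! (k + i)) \<in> (plus_edges E e)\<^sup>* \<longleftrightarrow> (snd e', ls ! (k + i)) \<in> E\<^sup>*"
    using plus_edges_reach[of "snd e'" "ls ! (k + i)" E e] rtrancl_mono[OF plus_edges_subset] by blast
  moreover have "k + i < length ls" using assms by simp
  ultimately show ?thesis using assms unfolding de_def by simp
qed

lemma de_plus_edges_below_iff:
  assumes e': "e' \<in> plus_edges E e" and "i < k"
  shows "i \<in> de E ls e' \<longleftrightarrow> (snd e', snd e) \<in> E\<^sup>*"
proof
  have i: "i \<in> de E ls e" using de_e assms(2) by simp
  then show "i \<in> de E ls e'" if "(snd e', snd e) \<in> E\<^sup>*"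
    using that unfolding de_def by (auto intro: rtrancl_trans)
  assume "i \<in> de E ls e'"
  then have "(snd e', ls ! i) \<in> E\<^sup>*" unfolding de_def by simp
  moreover have "(snd e, ls ! i) \<in> E\<^sup>*" using i unfolding de_def by simp
  ultimately consider "(snd e', snd e) \<in> E\<^sup>*" | "(snd e, snd e') \<in> E\<^sup>+"
    using rooted_tree_reach_comparable[OF tree] by (metis rtranclD)
  then show "(snd e', snd e) \<in> E\<^sup>*"
  proof cases
    case 2
    then obtain w where w: "(snd e, w) \<in> E\<^sup>*" "(w, snd e') \<in> E" by (meson tranclD2)
    have "e' \<in> E" using e' plus_edges_subset by blast
    then have "w = fst e'" using rooted_tree_in_edge_unique[OF tree w(2), of "fst e'"] by simp
    then have "edge_less E e' e \<or> e' = e" using w(1) unfolding edge_less_def by auto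
    with e' show ?thesis unfolding plus_edges_def by auto
  qed
qed

text \<open>The leaves 0..<k lie either all or none below e', and T_e^+ merges them into the single
  leaf snd e carrying their sum.\<close>

lemma edge_label_plus_edges:
  fixes gs :: "'g::monoid_add list"
  assumes e': "e' \<in> plus_edges E e" and len: "length gs = length ls"
  shows "edge_label (plus_edges E e) plus_leaves e' (plus_index gs) = edge_label E ls e' gs"
proof -
  define above where "above = ((snd e', snd e) \<in> E\<^sup>*)"
  define rest where "rest = sum_list (map (\<lambda>i. gs ! (k + i)) (filter (\<lambda>i. k + i \<in> de E ls e') [0..<length ls - k]))"
  have "edge_label (plus_edges E e) plus_leaves e' (plus_index gs)
      = sum_list (map (\<lambda>i. plus_index gs ! i) (filter (\<lambda>i. i \<in> de (plus_edges E e) plus_leaves e') [0..<1 + (length ls - k)]))"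
    unfolding edge_label_def using k_le_length by simp
  also have "\<dots> = (if above then sum_list (take k gs) else 0) + rest"
    unfolding sum_list_filter_upt_add rest_def above_def
    using de_plus_edges_Suc_iff[of _ e'] len k_le_length
    by (intro arg_cong2[where f = "(+)"] arg_cong[where f = sum_list] map_cong filter_cong)
      (auto simp: de_plus_edges_head_iff)
  also have "\<dots> = sum_list (map (\<lambda>i. gs ! i) (filter (\<lambda>i. i \<in> de E ls e') [0..<k])) + rest"
    using sum_list_filter_upt_const[of k gs "\<lambda>i. i \<in> de E ls e'" above] de_plus_edges_below_iff[OF e']
      len k_le_length unfolding above_def by simp
  also have "\<dots> = sum_list (map (\<lambda>i. gs ! i) (filter (\<lambda>i. i \<in> de E ls e') [0..<k + (length ls - k)]))"
    unfolding sum_list_filter_upt_add rest_def ..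
  also have "\<dots> = edge_label E ls e' gs"
    unfolding edge_label_def using k_le_length by simp
  finally show ?thesis .
qed

abbreviation I_plus :: "('g::monoid_add list, 'k::comm_ring_1) mpoly set" where
  "I_plus \<equiv> I_GT (plus_edges E e) plus_leaves"

abbreviation I_minus :: "('g::monoid_add list, 'k::comm_ring_1) mpoly set" where
  "I_minus \<equiv> I_GT (minus_edges E e) minus_leaves"

abbreviation tfp_generators :: "('g::monoid_add list + 'g list, 'k::comm_ring_1) mpoly set" where
  "tfp_generators \<equiv> subst (\<lambda>x. Var (Inl x)) ` I_plus \<union> subst (\<lambda>y. Var (Inr y)) ` I_minus"

abbreviation split_vars :: "('g::monoid_add list \<times> 'g list) set" where
  "split_vars \<equiv> tfp_vars (q_vars (length ls - k + 1)) (q_vars k) hd sum_list"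

abbreviation I_tfp :: "('g::monoid_add list \<times> 'g list, 'k::comm_ring_1) mpoly set" where
  "I_tfp \<equiv> toric_fiber_product (q_vars (length ls - k + 1)) (q_vars k) hd sum_list I_plus I_minus"

abbreviation join_index :: "'g list \<times> 'g list \<Rightarrow> 'g list" where
  "join_index z \<equiv> snd z @ tl (fst z)"

lemma phi_var_plus_edges:
  fixes gs :: "'g::monoid_add list"
  assumes "length gs = length ls"
  shows "phi_var (plus_edges E e) plus_leaves (plus_index gs)
    = (\<Prod>e'\<in>plus_edges E e. Var (e', edge_label E ls e' gs) :: (_ \<times> 'g::monoid_add, 'k::comm_ring_1) mpoly)"
  unfolding phi_var_def using edge_label_plus_edges[OF _ assms] by (intro prod.cong) auto

lemma phi_var_minus_edges:
  "phi_var (minus_edges E e) minus_leaves (minus_index gs)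
    = (\<Prod>e'\<in>minus_edges E e. Var (e', edge_label E ls e' gs) :: (_ \<times> 'g::monoid_add, 'k::comm_ring_1) mpoly)"
  unfolding phi_var_def by (rule prod.cong) (simp_all add: edge_label_minus_edges)

lemma binomial_in_gen_ideal_tfp_generators:
  fixes \<alpha> \<beta> :: "'g::monoid_add list \<Rightarrow>\<^sub>0 nat"
  assumes keys: "keys \<alpha> \<subseteq> q_vars (length ls)" "keys \<beta> \<subseteq> q_vars (length ls)"
    and same_image: "monomial_map (phi_exponent E ls) \<alpha> = monomial_map (phi_exponent E ls) \<beta>"
  shows "eval_monom (\<lambda>gs. Var (Inl (plus_index gs)) * Var (Inr (minus_index gs))) \<alpha>
       - eval_monom (\<lambda>gs. Var (Inl (plus_index gs)) * Var (Inr (minus_index gs))) \<beta>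
     \<in> (gen_ideal tfp_generators :: ('g list + 'g list, 'k::comm_ring_1) mpoly set)"
proof -
  have phi_same: "eval_monom (phi_var E ls) \<alpha> = (eval_monom (phi_var E ls) \<beta> :: (_, 'k) mpoly)"
    unfolding phi_var_eq_monomial eval_monom_monomials same_image ..
  have restrict: "subst (\<lambda>v. if fst v \<in> F then Var v else 1) (phi_var E ls gs)
      = (\<Prod>e'\<in>F. Var (e', edge_label E ls e' gs) :: (_, 'k) mpoly)" if "F \<subseteq> E" for F gs
    using subst_restrict_phi_var[OF rooted_tree_finite[OF tree] that] .
  define A where "A \<gamma> = eval_monom (\<lambda>x. Var (plus_index x) :: ('g list, 'k) mpoly) \<gamma>" for \<gamma>
  define B where "B \<gamma> = eval_monom (\<lambda>x. Var (minus_index x) :: ('g list, 'k) mpoly) \<gamma>" for \<gamma>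
  have A: "A \<alpha> - A \<beta> \<in> I_plus"
    unfolding A_def
    by (rule binomial_in_I_GT[OF keys phi_same,
          where R = "\<lambda>v. if fst v \<in> plus_edges E e then Var v else 1"])
      (auto simp: q_vars_def restrict[OF plus_edges_subset] phi_var_plus_edges)
  have B: "B \<alpha> - B \<beta> \<in> I_minus"
    unfolding B_def
    by (rule binomial_in_I_GT[OF keys phi_same,
          where R = "\<lambda>v. if fst v \<in> minus_edges E e then Var v else 1"])
      (auto simp: q_vars_def restrict[OF minus_edges_subset] phi_var_minus_edges k_le_length min_absorb2)
  let ?inl = "subst (\<lambda>x. Var (Inl x) :: ('g list + 'g list, 'k) mpoly)"
  let ?inr = "subst (\<lambda>y. Var (Inr y) :: ('g list + 'g list, 'k) mpoly)"
  have factor: "eval_monom (\<lambda>gs. Var (Inl (plus_index gs)) * Var (Inr (minus_index gs))) \<gamma>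
      = ?inl (A \<gamma>) * ?inr (B \<gamma>)" for \<gamma>
    unfolding A_def B_def subst_eval_monom subst_Var
    by (simp add: eval_monom_def power_mult_distrib prod.distrib)
  have "?inl (A \<alpha>) * ?inr (B \<alpha>) - ?inl (A \<beta>) * ?inr (B \<beta>)
      = ?inr (B \<alpha>) * ?inl (A \<alpha> - A \<beta>) + ?inl (A \<beta>) * ?inr (B \<alpha> - B \<beta>)"
    by (simp add: subst_diff algebra_simps)
  also have "\<dots> \<in> gen_ideal tfp_generators"
    using A B by (intro gen_ideal.add gen_ideal.gen) auto
  finally show ?thesis unfolding factor .
qed

text \<open>The a-variable of e occurs in the images of both halves of q_g, so the product of these
  images is phi_T(q_g) with that variable squared.\<close>

abbreviation square_edge :: "(('v \<times> 'v) \<times> 'g, 'k::comm_ring_1) mpoly \<Rightarrow> (('v \<times> 'v) \<times> 'g, 'k) mpoly" where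
  "square_edge \<equiv> subst (\<lambda>v. monomial (Poly_Mapping.single v (if fst v = e then 2 else 1)))"

lemma square_edge_eq_zero_imp: "square_edge p = 0 \<Longrightarrow> p = 0"
  by (rule subst_monomials_eq_zero_imp[OF inj_monomial_map_single]) simp_all

lemma phi_var_plus_times_minus:
  fixes gs :: "'g::monoid_add list"
  assumes "length gs = length ls"
  shows "phi_var (plus_edges E e) plus_leaves (plus_index gs) * phi_var (minus_edges E e) minus_leaves (minus_index gs)
    = (square_edge (phi_var E ls gs) :: (_, 'k::comm_ring_1) mpoly)"
proof -
  define V where "V e' = (Var (e', edge_label E ls e' gs) :: (('v \<times> 'v) \<times> 'g, 'k) mpoly)" for e'
  have fin: "finite E" by (rule rooted_tree_finite[OF tree])
  have "(\<Prod>e'\<in>plus_edges E e. V e') * (\<Prod>e'\<in>minus_edges E e. V e')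
      = (\<Prod>e'\<in>plus_edges E e \<union> minus_edges E e. V e') * (\<Prod>e'\<in>plus_edges E e \<inter> minus_edges E e. V e')"
    using finite_subset[OF plus_edges_subset fin] finite_subset[OF minus_edges_subset fin]
    by (rule prod.union_inter[symmetric])
  also have "\<dots> = (\<Prod>e'\<in>E. V e' * (if e' = e then V e' else 1))"
    unfolding plus_edges_Un_minus_edges plus_edges_Int_minus_edges[OF edge]
    using fin edge by (simp add: prod.distrib prod.delta)
  also have "\<dots> = square_edge (phi_var E ls gs)"
    unfolding phi_var_def subst_prod subst_Var V_def
    by (intro prod.cong refl) (simp add: Var_def mult_single numeral_2_eq_2 flip: single_add)
  finally show ?thesis
    unfolding V_def phi_var_plus_edges[OF assms] phi_var_minus_edges .
qed

lemma image_subset_toric_fiber_product: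
  "subst (\<lambda>gs. Var (plus_index gs, minus_index gs)) ` (I_GT E ls :: ('g::monoid_add list, 'k::comm_ring_1) mpoly set)
    \<subseteq> I_tfp"
proof
  fix q assume "q \<in> subst (\<lambda>gs. Var (plus_index gs, minus_index gs)) ` (I_GT E ls :: ('g list, 'k) mpoly set)"
  then obtain p :: "('g list, 'k) mpoly" where p: "p \<in> I_GT E ls"
    and q: "q = subst (\<lambda>gs. Var (plus_index gs, minus_index gs)) p" by blast
  have pvars_p: "pvars p \<subseteq> q_vars (length ls)" and kernel: "phi E ls p = 0"
    using p unfolding I_GT_def polys_in_def by auto
  have "pvars q \<subseteq> split_vars"
    unfolding q using pvars_p k_le_length
    by (intro pvars_subst) (auto simp: pvars_Var tfp_vars_def q_vars_def)
  moreover have "subst (\<lambda>(j, k). Var (Inl j) * Var (Inr k)) q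
      = subst (\<lambda>gs. Var (Inl (plus_index gs)) * Var (Inr (minus_index gs))) p"
    unfolding q subst_subst by simp
  moreover have "\<dots> \<in> gen_ideal tfp_generators"
    using kernel pvars_p keys_subset_pvars
    by (intro subst_kernel_monomials_in_gen_ideal[where \<mu> = "phi_exponent E ls"]
        binomial_in_gen_ideal_tfp_generators)
      (auto simp: phi_eq_subst_phi_var phi_var_eq_monomial)
  ultimately show "q \<in> I_tfp"
    unfolding toric_fiber_product_def polys_in_def by simp
qed

lemma split_vars_join:
  assumes "z \<in> (split_vars :: ('g::monoid_add list \<times> 'g list) set)"
  shows "length (join_index z) = length ls"
    and "plus_index (join_index z) = fst z" and "minus_index (join_index z) = snd z"
proof -
  have "length (fst z) = length ls - k + 1" "length (snd z) = k" "hd (fst z) = sum_list (snd z)"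
    using assms unfolding tfp_vars_def q_vars_def by auto
  then show "length (join_index z) = length ls"
    and "plus_index (join_index z) = fst z" and "minus_index (join_index z) = snd z"
    using k_le_length by (cases "fst z"; simp)+
qed

lemma square_edge_phi_join:
  fixes q :: "('g::monoid_add list \<times> 'g list, 'k::comm_ring_1) mpoly"
  assumes "pvars q \<subseteq> split_vars"
  shows "square_edge (phi E ls (subst (\<lambda>z. Var (join_index z)) q))
    = subst (case_sum (phi_var (plus_edges E e) plus_leaves) (phi_var (minus_edges E e) minus_leaves))
        (subst (\<lambda>(j, k). Var (Inl j) * Var (Inr k)) q)"
  unfolding phi_eq_subst_phi_var subst_subst subst_Var
proof (intro subst_cong)
  fix z assume "z \<in> pvars q"
  then have "z \<in> split_vars" using assms by blast
  note join = split_vars_join[OF this]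
  show "square_edge (phi_var E ls (join_index z))
      = subst (case_sum (phi_var (plus_edges E e) plus_leaves) (phi_var (minus_edges E e) minus_leaves))
          (case z of (j, k) \<Rightarrow> Var (Inl j) * Var (Inr k))"
    using phi_var_plus_times_minus[OF join(1), unfolded join(2), unfolded join(3), symmetric]
    by (simp add: case_prod_beta subst_mult)
qed

lemma toric_fiber_product_subset_image:
  "I_tfp \<subseteq> subst (\<lambda>gs. Var (plus_index gs, minus_index gs)) `
    (I_GT E ls :: ('g::monoid_add list, 'k::comm_ring_1) mpoly set)"
proof
  fix q :: "('g list \<times> 'g list, 'k) mpoly"
  assume "q \<in> I_tfp"
  then have pvars_q: "pvars q \<subseteq> split_vars"
    and ideal: "subst (\<lambda>(j, k). Var (Inl j) * Var (Inr k)) q \<in> gen_ideal tfp_generators"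
    unfolding toric_fiber_product_def polys_in_def by auto
  note join = split_vars_join[OF subsetD[OF pvars_q]]
  define p where "p = subst (\<lambda>z. Var (join_index z)) q"
  have "subst (\<lambda>gs. Var (plus_index gs, minus_index gs)) p = subst Var q"
    unfolding p_def subst_subst subst_Var using join by (intro subst_cong) (metis prod.collapse)
  then have q_eq: "q = subst (\<lambda>gs. Var (plus_index gs, minus_index gs)) p"
    by (simp add: subst_Var_self)
  have "pvars p \<subseteq> q_vars (length ls)"
    unfolding p_def using join by (intro pvars_subst) (simp add: pvars_Var q_vars_def)
  moreover have "square_edge (phi E ls p) = 0"
    unfolding p_def square_edge_phi_join[OF pvars_q] using ideal
    by (rule subst_gen_ideal_eq_zero) (auto simp: subst_subst I_GT_def phi_eq_subst_phi_var)
  ultimately have "p \<in> I_GT E ls"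
    unfolding I_GT_def polys_in_def using square_edge_eq_zero_imp by auto
  then show "q \<in> subst (\<lambda>gs. Var (plus_index gs, minus_index gs)) ` I_GT E ls"
    using q_eq by blast
qed

end

lemma int_lin_independent_unit_vec: "int_lin_independent (range unit_vec)"
  unfolding int_lin_independent_def
proof (intro notI, elim exE conjE bexE)
  fix t u v
  assume t: "finite t" "t \<subseteq> range unit_vec"
    and vanish: "(\<lambda>h'. \<Sum>v\<in>t. u v * v h') = (\<lambda>_. 0)" and v: "v \<in> t" "u v \<noteq> 0"
  obtain h where h: "v = unit_vec h" using t(2) v(1) by blast
  have "(\<Sum>w\<in>t. u w * w h) = (\<Sum>w\<in>t. if w = v then u w else 0)"
  proof (rule sum.cong[OF refl])
    fix w assume "w \<in> t"
    then obtain h' where "w = unit_vec h'" using t(2) by blast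
    then show "u w * w h = (if w = v then u w else 0)"
      using h by (auto simp: unit_vec_def fun_eq_iff)
  qed
  then have "(\<Sum>w\<in>t. u w * w h) = u v" using t(1) v(1) by simp
  then show False using fun_cong[OF vanish, of h] v(2) by simp
qed

theorem theorem3p9:
  fixes E :: "('v \<times> 'v) set" and r :: 'v and ls :: "'v list"
    and e :: "'v \<times> 'v" and k :: nat
  assumes tree: "rooted_tree E r ls"
    and intervals: "\<forall>e'\<in>E. \<exists>a b. de E ls e' = {a..b}"
    and interior: "interior_edge E r ls e"
    and de_e: "de E ls e = {0..<k}"
  shows "int_lin_independent (range (unit_vec :: 'g::{group_add, finite} \<Rightarrow> 'g \<Rightarrow> int))
    \<and> (\<lambda>p. subst (\<lambda>gs. Var (sum_list (take k gs) # drop k gs, take k gs)) p)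
          ` (I_GT E ls :: ('g list, 'k::field) mpoly set)
      = toric_fiber_product
          (q_vars (length ls - k + 1)) (q_vars k) hd sum_list
          (I_GT (plus_edges E e) (snd e # drop k ls))
          (I_GT (minus_edges E e) (take k ls))"
proof -
  have "e \<in> E" using interior unfolding interior_edge_def by simp
  then interpret edge_split E r ls e k
    using tree de_e by unfold_locales
  show ?thesis
    by (intro conjI int_lin_independent_unit_vec subset_antisym
        image_subset_toric_fiber_product toric_fiber_product_subset_image)
qed

end
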